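(* Let $C_1,\dots,C_K$ be $K\ge 2$ initial clusters (disjoint groups of users) and let $\alpha\in(0,1)$. Suppose a notion of "similarity" between clusters (including clusters formed as unions of the $C_i$) is given which is merge-invariant: whenever $A$, $B$, $D$ are clusters that are pairwise similar, $A$ is similar to the merged cluster $B\cup D$. Consider the following procedure. Set $C^{(0)}_i=C_i$ for $1\le i\le K$ and $b=0$. At iteration $b$ (with current clusters $C^{(b)}_1,\dots,C^{(b)}_{K-b}$), for every pair $i\neq j$ compute a p-value $\hat p^{(b)}_{i,j}$ for the hypothesis $H^{(b)}_{i,j}$: "$C^{(b)}_i$ is similar to $C^{(b)}_j$". If $\hat p^{(b)}_{i,j}<\alpha/K$ for all pairs $i\neq j$, stop, reject the null hypothesis, and report $C^{(b)}_1,\dots,C^{(b)}_{K-b}$ as disparate clusters. Otherwise merge the two clusters with the largest p-value $\hat p^{(b)}_{i,j}$ into one cluster, yielding clusters $C^{(b+1)}_1,\dots,C^{(b+1)}_{K-b-1}$, set $b\leftarrow b+1$ and repeat (if only one cluster remains, stop without rejecting). Assume the p-values are valid (i.e. whenever $H^{(b)}_{i,j}$ is true, $P(\hat p^{(b)}_{i,j}\le t)\le t$ for all $t\in[0,1]$) and are independent of the previous decisions to merge clusters (so this validity holds conditionally on the merge history). Then: (1) if the null hypothesis $H_0$: "$C_i$ is similar to $C_j$ for all $i\neq j$, $1\le i,j\le K$" is true, the probability that the procedure rejects $H_0$ is at most $\alpha$; and (2) the probability that the procedure rejects and reports clusters $C^{(b)}_1,\dots,C^{(b)}_{K-b}$ as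 disparate when in fact at least one pair of these reported clusters is similar is at most $\alpha$.
   Context: A "cluster" is a set of users formed as a union of some of the initial groups $C_1,\dots,C_K$. "Similarity" is an arbitrary pre-specified binary relation between clusters (e.g. equal treatment effect, equal lift, or equality of a fairness metric), assumed to satisfy the merge-invariance property stated in the claim. A p-value for a hypothesis is a statistic taking values in $[0,1]$. *)

theory Defs
  imports "HOL-Probability.Probability" "HOL-Library.Multiset"
begin

definition is_cluster :: "'u set list \<Rightarrow> 'u set \<Rightarrow> bool" where
  "is_cluster Cs X \<longleftrightarrow> (\<exists>I. I \<subseteq> {..<length Cs} \<and> I \<noteq> {} \<and> X = (\<Union>i\<in>I. Cs ! i))"

definition merge_invariant :: "'u set list \<Rightarrow> ('u set \<Rightarrow> 'u set \<Rightarrow> bool) \<Rightarrow> bool" where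
  "merge_invariant Cs sim \<longleftrightarrow>
     (\<forall>A B D. is_cluster Cs A \<and> is_cluster Cs B \<and> is_cluster Cs D \<and>
        sim A B \<and> sim A D \<and> sim B D \<longrightarrow> sim A (B \<union> D))"

text \<open>pv b i j \<omega> is the p-value at iteration b for the pair of current clusters at
  positions i, j; cfg b \<omega> is the list of current clusters at iteration b.\<close>
definition all_small ::
  "(nat \<Rightarrow> nat \<Rightarrow> nat \<Rightarrow> 'a \<Rightarrow> real) \<Rightarrow> (nat \<Rightarrow> 'a \<Rightarrow> 'u set list) \<Rightarrow> real \<Rightarrow> nat \<Rightarrow> 'a \<Rightarrow> bool" where
  "all_small pv cfg c b \<omega> \<longleftrightarrow>
     (\<forall>i<length (cfg b \<omega>). \<forall>j<length (cfg b \<omega>). i \<noteq> j \<longrightarrow> pv b i j \<omega> < c)"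

definition stops ::
  "(nat \<Rightarrow> nat \<Rightarrow> nat \<Rightarrow> 'a \<Rightarrow> real) \<Rightarrow> (nat \<Rightarrow> 'a \<Rightarrow> 'u set list) \<Rightarrow> real \<Rightarrow> nat \<Rightarrow> 'a \<Rightarrow> bool" where
  "stops pv cfg c b \<omega> \<longleftrightarrow> length (cfg b \<omega>) < 2 \<or> all_small pv cfg c b \<omega>"

definition reached ::
  "(nat \<Rightarrow> nat \<Rightarrow> nat \<Rightarrow> 'a \<Rightarrow> real) \<Rightarrow> (nat \<Rightarrow> 'a \<Rightarrow> 'u set list) \<Rightarrow> real \<Rightarrow> nat \<Rightarrow> 'a \<Rightarrow> bool" where
  "reached pv cfg c b \<omega> \<longleftrightarrow> (\<forall>b'<b. \<not> stops pv cfg c b' \<omega>)"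

definition rejects_at ::
  "(nat \<Rightarrow> nat \<Rightarrow> nat \<Rightarrow> 'a \<Rightarrow> real) \<Rightarrow> (nat \<Rightarrow> 'a \<Rightarrow> 'u set list) \<Rightarrow> real \<Rightarrow> nat \<Rightarrow> 'a \<Rightarrow> bool" where
  "rejects_at pv cfg c b \<omega> \<longleftrightarrow>
     reached pv cfg c b \<omega> \<and> length (cfg b \<omega>) \<ge> 2 \<and> all_small pv cfg c b \<omega>"

text \<open>One merge step: h' arises from h by merging two clusters (positions i \<noteq> j) whose
  p-value is largest among all pairs (any tie-breaking, any ordering of the result).\<close>
definition merge_step ::
  "(nat \<Rightarrow> nat \<Rightarrow> nat \<Rightarrow> 'a \<Rightarrow> real) \<Rightarrow> nat \<Rightarrow> 'a \<Rightarrow> 'u set list \<Rightarrow> 'u set list \<Rightarrow> bool" where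
  "merge_step pv b \<omega> h h' \<longleftrightarrow>
     (\<exists>i j. i < length h \<and> j < length h \<and> i \<noteq> j \<and>
        (\<forall>i' j'. i' < length h \<and> j' < length h \<and> i' \<noteq> j' \<longrightarrow> pv b i' j' \<omega> \<le> pv b i j \<omega>) \<and>
        mset h' = mset h - {# h ! i, h ! j #} + {# h ! i \<union> h ! j #})"

end

(* Along a run the current clusters are unions of initial groups, and each merge lowers their number
   by one, so a rejection can only happen at an iteration b < K - 1.  Fix b and condition on the
   finitely many possible merge histories up to b: if the reported clusters of a history contain a
   similar pair (i, j), rejecting forces pv b i j < alpha / K, which by validity has conditional
   probability at most alpha / K.  Summing over histories and over b bounds the probability of a
   rejection with a similar reported pair by (K - 1) alpha / K <= alpha.  Under H0, merge invariance
   keeps the current clusters pairwise similar, so every rejection has a similar reported pair.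
   Neither the disjointness of the initial groups nor the range of the p-values is needed. *)

theory Submission
  imports Defs
begin

definition pairwise_similar :: "('a \<Rightarrow> 'a \<Rightarrow> bool) \<Rightarrow> 'a list \<Rightarrow> bool" where
  "pairwise_similar S h \<longleftrightarrow> (\<forall>i<length h. \<forall>j<length h. i \<noteq> j \<longrightarrow> S (h ! i) (h ! j))"

definition has_similar_pair :: "('a \<Rightarrow> 'a \<Rightarrow> bool) \<Rightarrow> 'a list \<Rightarrow> bool" where
  "has_similar_pair S h \<longleftrightarrow> (\<exists>i<length h. \<exists>j<length h. i \<noteq> j \<and> S (h ! i) (h ! j))"

lemma pairwise_similar_imp_has_similar_pair:
  assumes "pairwise_similar S h" and "2 \<le> length h"
  shows "has_similar_pair S h"
proof -
  have "0 < length h" "1 < length h" "(0::nat) \<noteq> 1"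
    using assms(2) by auto
  then show ?thesis
    using assms(1) unfolding pairwise_similar_def has_similar_pair_def by blast
qed

lemma mset_conv_image_mset_nth: "mset h = image_mset (nth h) (mset_set {..<length h})"
proof -
  have "mset h = mset (map (nth h) [0..<length h])"
    by (simp only: map_nth)
  then show ?thesis
    by (simp add: atLeast0LessThan)
qed

lemma pair_subseteq_mset_iff:
  "{#x, y#} \<subseteq># mset h \<longleftrightarrow> (\<exists>i<length h. \<exists>j<length h. i \<noteq> j \<and> h ! i = x \<and> h ! j = y)"
proof
  assume xy: "{#x, y#} \<subseteq># mset h"
  then obtain i where i: "i < length h" "h ! i = x"
    by (metis in_set_conv_nth insert_subset_eq_iff set_mset_mset)
  have "mset h = add_mset x (image_mset (nth h) (mset_set ({..<length h} - {i})))"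
    using i by (simp add: mset_conv_image_mset_nth[of h] mset_set.remove[of _ i])
  then have "y \<in># image_mset (nth h) (mset_set ({..<length h} - {i}))"
    using xy by (metis insert_subset_eq_iff mset_subset_eq_add_mset_cancel)
  then show "\<exists>i<length h. \<exists>j<length h. i \<noteq> j \<and> h ! i = x \<and> h ! j = y"
    using i by auto
next
  assume "\<exists>i<length h. \<exists>j<length h. i \<noteq> j \<and> h ! i = x \<and> h ! j = y"
  then obtain i j where ij: "i < length h" "j < length h" "i \<noteq> j" "h ! i = x" "h ! j = y"
    by blast
  then have "mset_set {i, j} \<subseteq># mset_set {..<length h}"
    by (auto simp: subseteq_mset_def count_mset_set')
  then have "image_mset (nth h) (mset_set {i, j}) \<subseteq># mset h"
    unfolding mset_conv_image_mset_nth[of h] by (rule image_mset_subseteq_mono)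
  then show "{#x, y#} \<subseteq># mset h"
    using ij by simp
qed

definition pairwise_mset :: "('a \<Rightarrow> 'a \<Rightarrow> bool) \<Rightarrow> 'a multiset \<Rightarrow> bool" where
  "pairwise_mset S m \<longleftrightarrow> (\<forall>x y. {#x, y#} \<subseteq># m \<longrightarrow> S x y)"

lemma pairwise_similar_iff_pairwise_mset: "pairwise_similar S h \<longleftrightarrow> pairwise_mset S (mset h)"
  unfolding pairwise_similar_def pairwise_mset_def pair_subseteq_mset_iff by blast

lemma pair_subseteq_add_mset_cases:
  assumes "{#x, y#} \<subseteq># add_mset u r"
  obtains "{#x, y#} \<subseteq># r" | "x = u" "y \<in># r" | "y = u" "x \<in># r"
proof -
  consider "x = u" | "y = u" | "x \<noteq> u" "y \<noteq> u"
    by blast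
  then show thesis
  proof cases
    case 1
    then show thesis using assms that(2) by simp
  next
    case 2
    then show thesis using assms that(3) by (simp add: add_mset_commute)
  next
    case 3
    then show thesis using assms that(1) by (simp add: insert_subset_eq_iff)
  qed
qed

lemma pairwise_mset_merge:
  assumes ab: "{#a, b#} \<subseteq># m"
    and pairwise: "pairwise_mset S m"
    and sym: "symp S"
    and merge: "\<And>x. x \<in># m - {#a, b#} \<Longrightarrow> S x a \<Longrightarrow> S x b \<Longrightarrow> S a b \<Longrightarrow> S x (a \<union> b)"
  shows "pairwise_mset S (m - {#a, b#} + {#a \<union> b#})"
  unfolding pairwise_mset_def
proof (intro allI impI)
  fix x y
  define r where "r = m - {#a, b#}"
  assume "{#x, y#} \<subseteq># m - {#a, b#} + {#a \<union> b#}"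
  then have xy: "{#x, y#} \<subseteq># add_mset (a \<union> b) r"
    unfolding r_def by simp
  have m: "m = add_mset a (add_mset b r)"
    using ab unfolding r_def by (metis subset_mset.diff_add add_mset_add_single union_mset_add_mset_right)
  have S_merged: "S z (a \<union> b)" if z: "z \<in># r" for z
  proof (rule merge)
    show "z \<in># m - {#a, b#}"
      using z unfolding r_def .
    have "{#z, a#} \<subseteq># m" "{#z, b#} \<subseteq># m"
      using z unfolding m by simp_all
    then show "S z a" "S z b" "S a b"
      using ab pairwise unfolding pairwise_mset_def by blast+
  qed
  from xy show "S x y"
  proof (cases rule: pair_subseteq_add_mset_cases)
    case 1
    then have "{#x, y#} \<subseteq># m"
      unfolding m by (meson multi_psub_of_add_self subset_mset.dual_order.trans subset_mset.le_less)
    then show ?thesis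
      using pairwise unfolding pairwise_mset_def by blast
  next
    case 2
    then show ?thesis
      using S_merged sym by (blast dest: sympD)
  next
    case 3
    then show ?thesis
      using S_merged by blast
  qed
qed

lemma is_cluster_nth: "k < length Cs \<Longrightarrow> is_cluster Cs (Cs ! k)"
  unfolding is_cluster_def by (intro exI[of _ "{k}"]) auto

lemma is_cluster_Un:
  assumes "is_cluster Cs X" and "is_cluster Cs Y"
  shows "is_cluster Cs (X \<union> Y)"
proof -
  obtain I J where "I \<subseteq> {..<length Cs}" "I \<noteq> {}" "X = (\<Union>i\<in>I. Cs ! i)"
    and "J \<subseteq> {..<length Cs}" "Y = (\<Union>i\<in>J. Cs ! i)"
    using assms unfolding is_cluster_def by blast
  then show ?thesis
    unfolding is_cluster_def by (intro exI[of _ "I \<union> J"]) auto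
qed

lemma finite_clusters: "finite {X. is_cluster Cs X}"
proof (rule finite_subset)
  show "{X. is_cluster Cs X} \<subseteq> (\<lambda>I. \<Union>i\<in>I. Cs ! i) ` Pow {..<length Cs}"
    unfolding is_cluster_def by auto
qed simp

lemma merge_invariantD:
  assumes "merge_invariant Cs sim"
    and "is_cluster Cs A" "is_cluster Cs B" "is_cluster Cs D"
    and "sim A B" "sim A D" "sim B D"
  shows "sim A (B \<union> D)"
  using assms unfolding merge_invariant_def by blast

lemma merge_step_elim:
  assumes "merge_step pv b \<omega> h h'"
  obtains i j where "i < length h" "j < length h" "i \<noteq> j"
    and "mset h' = mset h - {#h ! i, h ! j#} + {#h ! i \<union> h ! j#}"
  using assms unfolding merge_step_def by blast

lemma merge_step_length:
  assumes "merge_step pv b \<omega> h h'"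
  shows "length h' = length h - 1"
proof -
  obtain i j where ij: "i < length h" "j < length h" "i \<noteq> j"
    and h': "mset h' = mset h - {#h ! i, h ! j#} + {#h ! i \<union> h ! j#}"
    using assms by (rule merge_step_elim)
  have "{#h ! i, h ! j#} \<subseteq># mset h"
    using ij unfolding pair_subseteq_mset_iff by blast
  then have "size (mset h') = size (mset h) - 2 + 1"
    unfolding h' by (simp add: size_Diff_submset)
  moreover have "2 \<le> length h"
    using ij by linarith
  ultimately show ?thesis
    by simp
qed

lemma merge_step_clusters:
  assumes "merge_step pv b \<omega> h h'" and "\<forall>X\<in>set h. is_cluster Cs X"
  shows "\<forall>X\<in>set h'. is_cluster Cs X"
proof
  fix X
  assume "X \<in> set h'"
  obtain i j where ij: "i < length h" "j < length h"
    and h': "mset h' = mset h - {#h ! i, h ! j#} + {#h ! i \<union> h ! j#}"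
    using assms(1) by (rule merge_step_elim)
  from \<open>X \<in> set h'\<close> have "X \<in># mset h - {#h ! i, h ! j#} + {#h ! i \<union> h ! j#}"
    unfolding h'[symmetric] by simp
  then have "X \<in> set h \<or> X = h ! i \<union> h ! j"
    by (auto dest: in_diffD)
  then show "is_cluster Cs X"
    using assms(2) ij is_cluster_Un nth_mem by metis
qed

lemma merge_step_pairwise_similar:
  assumes step: "merge_step pv b \<omega> h h'"
    and clusters: "\<forall>X\<in>set h. is_cluster Cs X"
    and sym: "symp sim"
    and merge_inv: "merge_invariant Cs sim"
    and pairwise: "pairwise_similar sim h"
  shows "pairwise_similar sim h'"
proof -
  obtain i j where ij: "i < length h" "j < length h" "i \<noteq> j"
    and h': "mset h' = mset h - {#h ! i, h ! j#} + {#h ! i \<union> h ! j#}"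
    using step by (rule merge_step_elim)
  have "pairwise_mset sim (mset h')"
    unfolding h'
  proof (rule pairwise_mset_merge[OF _ _ sym])
    show "{#h ! i, h ! j#} \<subseteq># mset h"
      using ij unfolding pair_subseteq_mset_iff by blast
    show "pairwise_mset sim (mset h)"
      using pairwise by (simp add: pairwise_similar_iff_pairwise_mset)
    fix x
    assume "x \<in># mset h - {#h ! i, h ! j#}" "sim x (h ! i)" "sim x (h ! j)" "sim (h ! i) (h ! j)"
    moreover have "x \<in> set h"
      using \<open>x \<in># mset h - {#h ! i, h ! j#}\<close> by (metis in_diffD set_mset_mset)
    ultimately show "sim x (h ! i \<union> h ! j)"
      using clusters ij by (intro merge_invariantD[OF merge_inv]) simp_all
  qed
  then show ?thesis
    by (simp add: pairwise_similar_iff_pairwise_mset)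
qed

lemma reached_Suc_iff:
  "reached pv cfg c (Suc b) \<omega> \<longleftrightarrow> reached pv cfg c b \<omega> \<and> \<not> stops pv cfg c b \<omega>"
  unfolding reached_def less_Suc_eq by blast

lemma reached_mono: "reached pv cfg c b \<omega> \<Longrightarrow> b' \<le> b \<Longrightarrow> reached pv cfg c b' \<omega>"
  unfolding reached_def by simp

lemma (in prob_space) prob_le_if_le_on_partition:
  assumes "finite I" and "disjoint_family_on E I" and "\<And>i. i \<in> I \<Longrightarrow> E i \<in> events"
    and "A \<in> events" and "A \<subseteq> (\<Union>i\<in>I. E i)" and "0 \<le> c"
    and "\<And>i. i \<in> I \<Longrightarrow> prob (A \<inter> E i) \<le> c * prob (E i)"
  shows "prob A \<le> c"
proof -
  have "prob A = prob (\<Union>i\<in>I. A \<inter> E i)"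
    using assms(5) by (intro arg_cong[where f = prob]) blast
  also have "\<dots> \<le> (\<Sum>i\<in>I. prob (A \<inter> E i))"
    using assms(1,3,4) by (intro measure_UNION_le) auto
  also have "\<dots> \<le> (\<Sum>i\<in>I. c * prob (E i))"
    using assms(7) by (rule sum_mono)
  also have "\<dots> = c * prob (\<Union>i\<in>I. E i)"
    using assms(1-3) by (simp add: sum_distrib_left measure_finite_Union image_subset_iff)
  also have "\<dots> \<le> c"
    using assms(6) by (simp add: mult_left_le)
  finally show ?thesis .
qed

locale cluster_merging_test = prob_space M
  for M :: "'a measure" and Cs :: "'u set list" and sim :: "'u set \<Rightarrow> 'u set \<Rightarrow> bool"
    and pv :: "nat \<Rightarrow> nat \<Rightarrow> nat \<Rightarrow> 'a \<Rightarrow> real" and cfg :: "nat \<Rightarrow> 'a \<Rightarrow> 'u set list"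
    and c :: real +
  assumes pv_measurable [measurable]: "\<And>b i j. pv b i j \<in> borel_measurable M"
    and cfg_measurable [measurable]: "\<And>b. cfg b \<in> measurable M (count_space UNIV)"
    and cfg_0: "\<And>\<omega>. \<omega> \<in> space M \<Longrightarrow> cfg 0 \<omega> = Cs"
    and cfg_Suc: "\<And>\<omega> b. \<omega> \<in> space M \<Longrightarrow> reached pv cfg c b \<omega> \<Longrightarrow> \<not> stops pv cfg c b \<omega> \<Longrightarrow>
      merge_step pv b \<omega> (cfg b \<omega>) (cfg (Suc b) \<omega>)"
    and valid_pvalues: "\<And>b H i j t. i < length (H b) \<Longrightarrow> j < length (H b) \<Longrightarrow> i \<noteq> j \<Longrightarrow>
      sim (H b ! i) (H b ! j) \<Longrightarrow> 0 \<le> t \<Longrightarrow> t \<le> 1 \<Longrightarrow>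
      prob {\<omega> \<in> space M. reached pv cfg c b \<omega> \<and> (\<forall>b'\<le>b. cfg b' \<omega> = H b') \<and> pv b i j \<omega> \<le> t}
        \<le> t * prob {\<omega> \<in> space M. reached pv cfg c b \<omega> \<and> (\<forall>b'\<le>b. cfg b' \<omega> = H b')}"
begin

lemma reached_cfg_induct:
  assumes "\<omega> \<in> space M" and "reached pv cfg c b \<omega>"
    and "P 0 Cs" and "\<And>b h h'. merge_step pv b \<omega> h h' \<Longrightarrow> P b h \<Longrightarrow> P (Suc b) h'"
  shows "P b (cfg b \<omega>)"
  using assms(2)
proof (induction b)
  case 0
  then show ?case
    using assms(1,3) cfg_0 by simp
next
  case (Suc b)
  then have "reached pv cfg c b \<omega>" "\<not> stops pv cfg c b \<omega>"
    by (simp_all add: reached_Suc_iff)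
  then show ?case
    using Suc.IH assms(1,4) cfg_Suc by blast
qed

lemma length_cfg: "\<omega> \<in> space M \<Longrightarrow> reached pv cfg c b \<omega> \<Longrightarrow> length (cfg b \<omega>) = length Cs - b"
  by (rule reached_cfg_induct[where P = "\<lambda>b h. length h = length Cs - b"]) (auto simp: merge_step_length)

lemma cfg_clusters: "\<omega> \<in> space M \<Longrightarrow> reached pv cfg c b \<omega> \<Longrightarrow> \<forall>X\<in>set (cfg b \<omega>). is_cluster Cs X"
  by (rule reached_cfg_induct[where P = "\<lambda>_ h. \<forall>X\<in>set h. is_cluster Cs X"])
    (auto simp: in_set_conv_nth is_cluster_nth dest: merge_step_clusters)

lemma pairwise_similar_cfg:
  assumes "symp sim" and "merge_invariant Cs sim" and "pairwise_similar sim Cs"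
    and "\<omega> \<in> space M" and "reached pv cfg c b \<omega>"
  shows "pairwise_similar sim (cfg b \<omega>)"
proof -
  have "(\<forall>X\<in>set (cfg b \<omega>). is_cluster Cs X) \<and> pairwise_similar sim (cfg b \<omega>)"
  proof (rule reached_cfg_induct[where P = "\<lambda>_ h. (\<forall>X\<in>set h. is_cluster Cs X) \<and> pairwise_similar sim h"])
    show "(\<forall>X\<in>set Cs. is_cluster Cs X) \<and> pairwise_similar sim Cs"
      using assms(3) by (auto simp: in_set_conv_nth is_cluster_nth)
  next
    fix b h h'
    assume step: "merge_step pv b \<omega> h h'"
      and invariant: "(\<forall>X\<in>set h. is_cluster Cs X) \<and> pairwise_similar sim h"
    then show "(\<forall>X\<in>set h'. is_cluster Cs X) \<and> pairwise_similar sim h'"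
      using merge_step_clusters[OF step] merge_step_pairwise_similar[OF step _ assms(1,2)] by simp
  qed (use assms in auto)
  then show ?thesis ..
qed

lemma rejects_at_less: "\<omega> \<in> space M \<Longrightarrow> rejects_at pv cfg c b \<omega> \<Longrightarrow> b < length Cs - 1"
  using length_cfg unfolding rejects_at_def by fastforce

lemma pred_cfg [measurable]: "Measurable.pred M (\<lambda>\<omega>. Q (cfg b \<omega>))"
  by (rule measurable_compose[OF cfg_measurable]) simp

lemma reached_measurable [measurable]: "Measurable.pred M (reached pv cfg c b)"
  unfolding reached_def stops_def all_small_def by measurable

lemma rejects_at_measurable [measurable]: "Measurable.pred M (rejects_at pv cfg c b)"
  unfolding rejects_at_def all_small_def by measurable

definition history_event :: "nat \<Rightarrow> (nat \<Rightarrow> 'u set list) \<Rightarrow> 'a set" where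
  "history_event b H = {\<omega> \<in> space M. reached pv cfg c b \<omega> \<and> (\<forall>b'\<le>b. cfg b' \<omega> = H b')}"

lemma history_event_in_events [measurable]: "history_event b H \<in> events"
  unfolding history_event_def by measurable

lemma prob_rejects_at_similar_given_history:
  assumes "0 \<le> c" and "c \<le> 1"
  shows "prob ({\<omega> \<in> space M. rejects_at pv cfg c b \<omega> \<and> has_similar_pair sim (cfg b \<omega>)}
      \<inter> history_event b H) \<le> c * prob (history_event b H)"
proof (cases "has_similar_pair sim (H b)")
  case True
  then obtain i j where ij: "i < length (H b)" "j < length (H b)" "i \<noteq> j" "sim (H b ! i) (H b ! j)"
    unfolding has_similar_pair_def by blast
  have "{\<omega> \<in> space M. rejects_at pv cfg c b \<omega> \<and> has_similar_pair sim (cfg b \<omega>)} \<inter> history_event b H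
      \<subseteq> {\<omega> \<in> space M. reached pv cfg c b \<omega> \<and> (\<forall>b'\<le>b. cfg b' \<omega> = H b') \<and> pv b i j \<omega> \<le> c}"
    using ij by (auto simp: history_event_def rejects_at_def all_small_def less_imp_le)
  then have "prob ({\<omega> \<in> space M. rejects_at pv cfg c b \<omega> \<and> has_similar_pair sim (cfg b \<omega>)}
      \<inter> history_event b H)
      \<le> prob {\<omega> \<in> space M. reached pv cfg c b \<omega> \<and> (\<forall>b'\<le>b. cfg b' \<omega> = H b') \<and> pv b i j \<omega> \<le> c}"
    by (rule finite_measure_mono) measurable
  also have "\<dots> \<le> c * prob (history_event b H)"
    unfolding history_event_def using ij assms by (rule valid_pvalues)
  finally show ?thesis .
next
  case False
  then have "{\<omega> \<in> space M. rejects_at pv cfg c b \<omega> \<and> has_similar_pair sim (cfg b \<omega>)}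
      \<inter> history_event b H = {}"
    by (auto simp: history_event_def)
  then show ?thesis
    using assms by simp
qed

lemma prob_rejects_at_similar:
  assumes "0 \<le> c" and "c \<le> 1"
  shows "prob {\<omega> \<in> space M. rejects_at pv cfg c b \<omega> \<and> has_similar_pair sim (cfg b \<omega>)} \<le> c"
proof -
  define L where "L = {h. set h \<subseteq> {X. is_cluster Cs X} \<and> length h \<le> length Cs}"
  define histories where "histories = {..b} \<rightarrow>\<^sub>E L"
  show ?thesis
  proof (rule prob_le_if_le_on_partition[where I = histories and E = "history_event b"])
    show "finite histories"
      unfolding histories_def L_def by (intro finite_PiE finite_lists_length_le finite_clusters) auto
    show "disjoint_family_on (history_event b) histories"
      unfolding disjoint_family_on_def
    proof (intro ballI impI)
      fix H H'
      assume "H \<in> histories" "H' \<in> histories" "H \<noteq> H'"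
      then have "\<exists>b'\<in>{..b}. H b' \<noteq> H' b'"
        unfolding histories_def using PiE_ext by blast
      then show "history_event b H \<inter> history_event b H' = {}"
        unfolding history_event_def by auto
    qed
    show "{\<omega> \<in> space M. rejects_at pv cfg c b \<omega> \<and> has_similar_pair sim (cfg b \<omega>)}
        \<subseteq> (\<Union>H\<in>histories. history_event b H)"
    proof
      fix \<omega>
      assume "\<omega> \<in> {\<omega> \<in> space M. rejects_at pv cfg c b \<omega> \<and> has_similar_pair sim (cfg b \<omega>)}"
      then have \<omega>: "\<omega> \<in> space M" and reached: "reached pv cfg c b \<omega>"
        by (simp_all add: rejects_at_def)
      have "cfg b' \<omega> \<in> L" if "b' \<le> b" for b'
        using cfg_clusters[OF \<omega>] length_cfg[OF \<omega>] reached_mono[OF reached that] unfolding L_def by auto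
      then have "restrict (\<lambda>b'. cfg b' \<omega>) {..b} \<in> histories"
        unfolding histories_def by simp
      moreover have "\<omega> \<in> history_event b (restrict (\<lambda>b'. cfg b' \<omega>) {..b})"
        using \<omega> reached unfolding history_event_def by simp
      ultimately show "\<omega> \<in> (\<Union>H\<in>histories. history_event b H)"
        by blast
    qed
    show "{\<omega> \<in> space M. rejects_at pv cfg c b \<omega> \<and> has_similar_pair sim (cfg b \<omega>)} \<in> events"
      by measurable
    show "prob ({\<omega> \<in> space M. rejects_at pv cfg c b \<omega> \<and> has_similar_pair sim (cfg b \<omega>)}
        \<inter> history_event b H) \<le> c * prob (history_event b H)" for H
      using assms by (rule prob_rejects_at_similar_given_history)
  qed (use assms(1) in simp_all)
qed

lemma prob_rejects_similar:
  assumes "0 \<le> c" and "c \<le> 1"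
  shows "prob {\<omega> \<in> space M. \<exists>b. rejects_at pv cfg c b \<omega> \<and> has_similar_pair sim (cfg b \<omega>)}
    \<le> real (length Cs - 1) * c"
proof -
  have "{\<omega> \<in> space M. \<exists>b. rejects_at pv cfg c b \<omega> \<and> has_similar_pair sim (cfg b \<omega>)}
      = (\<Union>b<length Cs - 1. {\<omega> \<in> space M. rejects_at pv cfg c b \<omega> \<and> has_similar_pair sim (cfg b \<omega>)})"
    using rejects_at_less by blast
  also have "prob \<dots> \<le> (\<Sum>b<length Cs - 1.
      prob {\<omega> \<in> space M. rejects_at pv cfg c b \<omega> \<and> has_similar_pair sim (cfg b \<omega>)})"
    by (rule measure_UNION_le) auto
  also have "\<dots> \<le> (\<Sum>b<length Cs - 1. c)"
    using assms by (intro sum_mono prob_rejects_at_similar)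
  finally show ?thesis
    by simp
qed

lemma rejects_at_imp_has_similar_pair:
  assumes "symp sim" and "merge_invariant Cs sim" and "pairwise_similar sim Cs"
    and "\<omega> \<in> space M" and "rejects_at pv cfg c b \<omega>"
  shows "has_similar_pair sim (cfg b \<omega>)"
  using assms pairwise_similar_cfg pairwise_similar_imp_has_similar_pair
  unfolding rejects_at_def by blast

end

theorem theorem4p2:
  fixes M :: "'a measure"
    and Cs :: "'u set list"
    and sim :: "'u set \<Rightarrow> 'u set \<Rightarrow> bool"
    and \<alpha> :: real
    and pv :: "nat \<Rightarrow> nat \<Rightarrow> nat \<Rightarrow> 'a \<Rightarrow> real"
    and cfg :: "nat \<Rightarrow> 'a \<Rightarrow> 'u set list"
  defines "K \<equiv> length Cs"
  defines "c \<equiv> \<alpha> / real K"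
  assumes P: "prob_space M"
    and K2: "K \<ge> 2"
    and disj: "\<forall>i<K. \<forall>j<K. i \<noteq> j \<longrightarrow> Cs ! i \<inter> Cs ! j = {}"
    and alpha: "0 < \<alpha>" "\<alpha> < 1"
    and sim_sym: "\<forall>X Y. sim X Y \<longrightarrow> sim Y X"
    and merge_inv: "merge_invariant Cs sim"
    and pv_meas: "\<forall>b i j. pv b i j \<in> borel_measurable M"
    and pv_range: "\<forall>b i j. \<forall>\<omega>\<in>space M. 0 \<le> pv b i j \<omega> \<and> pv b i j \<omega> \<le> 1"
    and cfg_meas: "\<forall>b. cfg b \<in> measurable M (count_space UNIV)"
    and init: "\<forall>\<omega>\<in>space M. cfg 0 \<omega> = Cs"
    and step: "\<forall>\<omega>\<in>space M. \<forall>b. reached pv cfg c b \<omega> \<and> \<not> stops pv cfg c b \<omega> \<longrightarrow>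
                 merge_step pv b \<omega> (cfg b \<omega>) (cfg (Suc b) \<omega>)"
    and valid: "\<forall>b (H :: nat \<Rightarrow> 'u set list) i j t.
                 i < length (H b) \<and> j < length (H b) \<and> i \<noteq> j \<and> sim (H b ! i) (H b ! j)
                 \<and> 0 \<le> t \<and> t \<le> 1 \<longrightarrow>
                 measure M {\<omega> \<in> space M. reached pv cfg c b \<omega> \<and> (\<forall>b'\<le>b. cfg b' \<omega> = H b')
                                          \<and> pv b i j \<omega> \<le> t}
                 \<le> t * measure M {\<omega> \<in> space M. reached pv cfg c b \<omega> \<and> (\<forall>b'\<le>b. cfg b' \<omega> = H b')}"
  shows "((\<forall>i<K. \<forall>j<K. i \<noteq> j \<longrightarrow> sim (Cs ! i) (Cs ! j)) \<longrightarrow>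
            measure M {\<omega> \<in> space M. \<exists>b. rejects_at pv cfg c b \<omega>} \<le> \<alpha>)
       \<and> measure M {\<omega> \<in> space M. \<exists>b. rejects_at pv cfg c b \<omega> \<and>
            (\<exists>i<length (cfg b \<omega>). \<exists>j<length (cfg b \<omega>). i \<noteq> j \<and> sim (cfg b \<omega> ! i) (cfg b \<omega> ! j))}
         \<le> \<alpha>"
proof -
  interpret cluster_merging_test M Cs sim pv cfg c
    by (intro cluster_merging_test.intro cluster_merging_test_axioms.intro P)
      (use pv_meas cfg_meas init step valid in blast)+
  have sym: "symp sim"
    using sim_sym by (simp add: symp_def)
  have c: "0 \<le> c" "c \<le> 1"
    using alpha K2 unfolding c_def by (auto simp: field_simps)
  have "real (K - 1) * c \<le> \<alpha>"
    using K2 alpha unfolding c_def by (simp add: field_simps of_nat_diff)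
  then have similar:
    "prob {\<omega> \<in> space M. \<exists>b. rejects_at pv cfg c b \<omega> \<and> has_similar_pair sim (cfg b \<omega>)} \<le> \<alpha>"
    using prob_rejects_similar[OF c] unfolding K_def by linarith
  have "prob {\<omega> \<in> space M. \<exists>b. rejects_at pv cfg c b \<omega>} \<le> \<alpha>" if H0: "pairwise_similar sim Cs"
  proof -
    have "{\<omega> \<in> space M. \<exists>b. rejects_at pv cfg c b \<omega>}
        \<subseteq> {\<omega> \<in> space M. \<exists>b. rejects_at pv cfg c b \<omega> \<and> has_similar_pair sim (cfg b \<omega>)}"
      using rejects_at_imp_has_similar_pair[OF sym merge_inv H0] by blast
    then have "prob {\<omega> \<in> space M. \<exists>b. rejects_at pv cfg c b \<omega>}
        \<le> prob {\<omega> \<in> space M. \<exists>b. rejects_at pv cfg c b \<omega> \<and> has_similar_pair sim (cfg b \<omega>)}"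
      by (rule finite_measure_mono) measurable
    with similar show ?thesis
      by linarith
  qed
  with similar show ?thesis
    unfolding pairwise_similar_def has_similar_pair_def K_def by blast
qed

end
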